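(* The rule $R$ is a well-defined function $\Sigma^n\to\Sigma^n$: there is no $s\in\Sigma^n$ with $ICR_0(s)\in\mathrm{Reps}$, $ICR_1(s)\in\mathrm{Reps}$ and $ICR_0(s)\neq ICR_2(s)$ (in particular, if $k>2$ there is no $s$ with both $ICR_0(s),ICR_1(s)\in\mathrm{Reps}$).
   Context: Let $k\ge 2$, $\Sigma=\{0,\dots,k-1\}$ with arithmetic modulo $k$, $n\ge 1$, and $s=s[0]\cdots s[n-1]\in\Sigma^n$. For an integer $j$, $ICR_j(s)=s[1]\cdots s[n-1](s[0]+j)$; each $ICR_j$ is a bijection of $\Sigma^n$; $ICR=ICR_1$. Let $\mathbf N$ be the set of cycles (orbits) of the permutation $ICR_1$ of $\Sigma^n$; $orbit(s)$ is the cycle containing $s$. Let $\mathbf G$ be the directed graph on $\mathbf N$ with an arc $(\mathcal U,\mathcal V)$ iff some $s\in\mathcal U$ has $ICR_0(s)\in\mathcal V$. Let $\mathbf T$ be a directed spanning tree of $\mathbf G$ rooted at $\mathcal R\in\mathbf N$ (arcs from parent to child), with parent map $parent$ on $\mathbf N\setminus\{\mathcal R\}$; the depth of a cycle is its distance from the root (root has depth $0$). For each $\mathcal U\ne\mathcal R$, a representative $rep(\mathcal U)$ is a fixed node $s\in\mathcal U$ with $ICR_0^{-1}(s)\in parent(\mathcal U)$ and $s[n-1]\equiv \text{depth}(\mathcal U)\pmod k$ (such a node is assumed to exist and one is fixed). $\mathrm{Reps}$ is the set of all representatives. Define $R(s)=ICR_0(s)$ if $ICR_0(s)\in\mathrm{Reps}$;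 $R(s)=ICR_2(s)$ if $ICR_1(s)\in\mathrm{Reps}$; $R(s)=ICR_1(s)$ otherwise. *)

theory Defs
  imports Main
begin

definition words :: "nat \<Rightarrow> nat \<Rightarrow> nat list set" where
  "words k n = {s. length s = n \<and> set s \<subseteq> {0..<k}}"

definition icr :: "nat \<Rightarrow> nat \<Rightarrow> nat list \<Rightarrow> nat list" where
  "icr k j s = tl s @ [(hd s + j) mod k]"

definition orbit_icr :: "nat \<Rightarrow> nat list \<Rightarrow> nat list set" where
  "orbit_icr k s = {(icr k 1 ^^ m) s | m. True}"

definition cycles :: "nat \<Rightarrow> nat \<Rightarrow> nat list set set" where
  "cycles k n = orbit_icr k ` words k n"

definition arcG :: "nat \<Rightarrow> nat list set \<Rightarrow> nat list set \<Rightarrow> bool" where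
  "arcG k U V \<longleftrightarrow> (\<exists>s\<in>U. icr k 0 s \<in> V)"

text \<open>par is the parent map of a directed spanning tree of G (on the cycle set N)
  rooted at root, arcs from parent to child.\<close>
definition spanning_tree ::
  "nat \<Rightarrow> nat \<Rightarrow> nat list set \<Rightarrow> (nat list set \<Rightarrow> nat list set) \<Rightarrow> bool" where
  "spanning_tree k n root par \<longleftrightarrow>
     root \<in> cycles k n \<and>
     (\<forall>U \<in> cycles k n - {root}. par U \<in> cycles k n \<and> arcG k (par U) U) \<and>
     (\<forall>U \<in> cycles k n. \<exists>d. (par ^^ d) U = root)"

definition depth :: "nat list set \<Rightarrow> (nat list set \<Rightarrow> nat list set) \<Rightarrow> nat list set \<Rightarrow> nat" where
  "depth root par U = (LEAST d. (par ^^ d) U = root)"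

definition valid_reps ::
  "nat \<Rightarrow> nat \<Rightarrow> nat list set \<Rightarrow> (nat list set \<Rightarrow> nat list set)
     \<Rightarrow> (nat list set \<Rightarrow> nat list) \<Rightarrow> bool" where
  "valid_reps k n root par rep \<longleftrightarrow>
     (\<forall>U \<in> cycles k n - {root}.
        rep U \<in> U \<and>
        (\<exists>t \<in> par U. icr k 0 t = rep U) \<and>
        last (rep U) = depth root par U mod k)"

definition Reps ::
  "nat \<Rightarrow> nat \<Rightarrow> nat list set \<Rightarrow> (nat list set \<Rightarrow> nat list) \<Rightarrow> nat list set" where
  "Reps k n root rep = rep ` (cycles k n - {root})"

end

theory Submission
  imports Defs "HOL-Number_Theory.Cong"
begin

text \<open>Suppose \<open>ICR\<^sub>0(s) = rep U\<close> and \<open>ICR\<^sub>1(s) = rep V\<close>. Since \<open>ICR\<^sub>0\<close> is injective on words,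
  \<open>s\<close> is the \<open>ICR\<^sub>0\<close>-preimage of \<open>rep U\<close> lying in \<open>parent U\<close>; and \<open>ICR\<^sub>1(s)\<close> lies in the
  cycle of \<open>s\<close>, so \<open>V = parent U\<close> and \<open>depth U = depth V + 1\<close>. Reading off last symbols,
  \<open>s[0] \<equiv> depth V + 1\<close> and \<open>s[0] + 1 \<equiv> depth V (mod k)\<close>, hence \<open>k\<close> divides 2. So \<open>k = 2\<close>,
  and then \<open>ICR\<^sub>0 = ICR\<^sub>2\<close>.\<close>

lemma funpow_icr:
  assumes "m \<le> length s"
  shows "(icr k j ^^ m) s = drop m s @ map (\<lambda>x. (x + j) mod k) (take m s)"
  using assms
proof (induction m)
  case 0
  then show ?case by simp
next
  case (Suc m)
  then have "m < length s" by simp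
  then have "drop m s = s ! m # drop (Suc m) s" by (simp add: Cons_nth_drop_Suc)
  with Suc \<open>m < length s\<close> show ?case by (simp add: icr_def take_Suc_conv_app_nth)
qed

lemma funpow_icr_length_mult:
  assumes "\<forall>x \<in> set s. x < k"
  shows "(icr k 1 ^^ (length s * i)) s = map (\<lambda>x. (x + i) mod k) s"
proof (induction i)
  case 0
  then show ?case using assms by (simp add: map_idI)
next
  case (Suc i)
  have "(icr k 1 ^^ (length s * Suc i)) s = (icr k 1 ^^ length s) ((icr k 1 ^^ (length s * i)) s)"
    by (simp add: funpow_add)
  also have "\<dots> = map (\<lambda>x. (x + Suc i) mod k) s"
    using funpow_icr[of "length s" "(icr k 1 ^^ (length s * i)) s" k 1] Suc
    by (simp add: mod_Suc_eq)
  finally show ?case .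
qed

lemma funpow_icr_period:
  assumes "s \<in> words k n"
  shows "(icr k 1 ^^ (n * k)) s = s"
proof -
  have "length s = n" and "\<forall>x \<in> set s. x < k" using assms by (auto simp: words_def)
  then show ?thesis using funpow_icr_length_mult[of s k k] by (simp add: map_idI)
qed

lemma funpow_periodic_return:
  assumes "(f ^^ p) x = x" and "0 < p"
  shows "(f ^^ (p * m - m)) ((f ^^ m) x) = x"
proof -
  have "(f ^^ (p * m - m)) ((f ^^ m) x) = (f ^^ (p * m)) x"
  proof -
    have "p * m - m + m = p * m" using \<open>0 < p\<close> by simp
    then show ?thesis by (metis comp_apply funpow_add)
  qed
  also have "\<dots> = x"
    using funpow_mod_eq[where f=f and n=p and x=x and m="p * m"] assms(1) by simp
  finally show ?thesis .
qed

lemma inj_on_icr: "inj_on (icr k j) (words k n)"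
proof
  fix s t assume s: "s \<in> words k n" and t: "t \<in> words k n" and eq: "icr k j s = icr k j t"
  show "s = t"
  proof (cases n)
    case 0
    with s t show ?thesis by (simp add: words_def)
  next
    case (Suc m)
    with s t obtain a as b bs where "s = a # as" "t = b # bs" "a < k" "b < k"
      by (cases s; cases t) (auto simp: words_def)
    with eq have "as = bs" and "[a + j = b + j] (mod k)" by (simp_all add: icr_def cong_def)
    then have "[a = b] (mod k)" by (simp only: cong_add_rcancel_nat)
    with \<open>a < k\<close> \<open>b < k\<close> have "a = b" by (simp add: cong_def)
    with \<open>as = bs\<close> show ?thesis by (simp add: \<open>s = a # as\<close> \<open>t = b # bs\<close>)
  qed
qed

lemma icr_in_words:
  assumes "s \<in> words k n" and "0 < k" and "0 < n"
  shows "icr k j s \<in> words k n"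
  using assms by (cases s) (auto simp: words_def icr_def)

lemma funpow_icr_in_words:
  assumes "s \<in> words k n" and "0 < k" and "0 < n"
  shows "(icr k j ^^ m) s \<in> words k n"
  using assms by (induction m) (auto intro: icr_in_words)

lemma icr_1_in_cycle:
  assumes "U \<in> cycles k n" and "t \<in> U"
  shows "icr k 1 t \<in> U"
proof -
  obtain w m where "U = orbit_icr k w" "t = (icr k 1 ^^ m) w"
    using assms unfolding cycles_def orbit_icr_def by blast
  then have "icr k 1 t = (icr k 1 ^^ Suc m) w" and "U = orbit_icr k w" by simp_all
  then show ?thesis unfolding orbit_icr_def by blast
qed

lemma orbit_icr_sym:
  assumes "s \<in> words k n" and "0 < k" and "0 < n" and "t \<in> orbit_icr k s"
  shows "s \<in> orbit_icr k t"
proof -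
  obtain m where "t = (icr k 1 ^^ m) s" using assms(4) unfolding orbit_icr_def by blast
  then have "(icr k 1 ^^ (n * k * m - m)) t = s"
    using funpow_periodic_return[OF funpow_icr_period[OF assms(1)]] assms(2,3) by simp
  then show ?thesis unfolding orbit_icr_def by blast
qed

lemma orbit_icr_trans: "t \<in> orbit_icr k s \<Longrightarrow> u \<in> orbit_icr k t \<Longrightarrow> u \<in> orbit_icr k s"
proof -
  assume "t \<in> orbit_icr k s" "u \<in> orbit_icr k t"
  then obtain a b where "t = (icr k 1 ^^ a) s" "u = (icr k 1 ^^ b) t"
    unfolding orbit_icr_def by blast
  then have "u = (icr k 1 ^^ (b + a)) s" by (simp add: funpow_add)
  then show ?thesis unfolding orbit_icr_def by blast
qed

lemma cycles_subset_words:
  assumes "U \<in> cycles k n" and "0 < k" and "0 < n"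
  shows "U \<subseteq> words k n"
  using assms funpow_icr_in_words unfolding cycles_def orbit_icr_def by blast

lemma cycles_eq_if_common_element:
  assumes "U \<in> cycles k n" "V \<in> cycles k n" "x \<in> U" "x \<in> V" and "0 < k" and "0 < n"
  shows "U = V"
proof -
  have eq_orbit: "W = orbit_icr k x" if "W \<in> cycles k n" "x \<in> W" for W
  proof -
    obtain w where w: "w \<in> words k n" "W = orbit_icr k w" using \<open>W \<in> cycles k n\<close>
      unfolding cycles_def by blast
    with \<open>x \<in> W\<close> have "w \<in> orbit_icr k x" using orbit_icr_sym assms(5,6) by blast
    with w \<open>x \<in> W\<close> show ?thesis using orbit_icr_trans by blast
  qed
  show ?thesis using eq_orbit assms(1-4) by blast
qed

lemma depth_eq_Suc_depth_parent:
  assumes "(par ^^ d) U = root" and "U \<noteq> root"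
  shows "depth root par U = Suc (depth root par (par U))"
proof -
  have "(LEAST d. (par ^^ d) U = root) = Suc (LEAST m. (par ^^ Suc m) U = root)"
    by (rule Least_Suc[of _ d]) (use assms in auto)
  then show ?thesis unfolding depth_def by (simp add: funpow_Suc_right del: funpow.simps)
qed

lemma icr_0_icr_1_in_Reps_imp_dvd_2:
  assumes "0 < k" and "0 < n"
    and tree: "spanning_tree k n root par"
    and reps: "valid_reps k n root par rep"
    and s: "s \<in> words k n"
    and "icr k 0 s \<in> Reps k n root rep" and "icr k 1 s \<in> Reps k n root rep"
  shows "k dvd 2"
proof -
  obtain U where U: "U \<in> cycles k n - {root}" "icr k 0 s = rep U"
    using \<open>icr k 0 s \<in> Reps k n root rep\<close> unfolding Reps_def by auto
  obtain V where V: "V \<in> cycles k n - {root}" "icr k 1 s = rep V"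
    using \<open>icr k 1 s \<in> Reps k n root rep\<close> unfolding Reps_def by auto
  have parent_U: "par U \<in> cycles k n" and "\<exists>d. (par ^^ d) U = root"
    using tree U(1) unfolding spanning_tree_def by auto
  obtain t where t: "t \<in> par U" "icr k 0 t = rep U"
    using reps U(1) unfolding valid_reps_def by blast
  have "t \<in> words k n" using cycles_subset_words[OF parent_U \<open>0 < k\<close> \<open>0 < n\<close>] t(1) by blast
  with s t(2) U(2) have "t = s" using inj_onD[OF inj_on_icr[of k 0 n]] by simp
  with t(1) have "icr k 1 s \<in> par U" using icr_1_in_cycle[OF parent_U] by simp
  moreover have "icr k 1 s \<in> V" using reps V unfolding valid_reps_def by auto
  ultimately have "V = par U"
    using cycles_eq_if_common_element parent_U V(1) \<open>0 < k\<close> \<open>0 < n\<close> by blast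
  then have depth_U: "depth root par U = Suc (depth root par V)"
    using depth_eq_Suc_depth_parent \<open>\<exists>d. (par ^^ d) U = root\<close> U(1) by blast
  have "last (rep U) = depth root par U mod k" and "last (rep V) = depth root par V mod k"
    using reps U(1) V(1) unfolding valid_reps_def by blast+
  moreover have "hd s < k" using s \<open>0 < n\<close> by (cases s) (auto simp: words_def)
  ultimately have "hd s = Suc (depth root par V) mod k"
    and "(hd s + 1) mod k = depth root par V mod k"
    using U(2)[symmetric] V(2)[symmetric] depth_U by (simp_all add: icr_def)
  then have "(depth root par V + 2) mod k = depth root par V mod k"
    by (simp add: mod_Suc_eq)
  then show "k dvd 2" using mod_eq_dvd_iff_nat[of "depth root par V" _ k] by simp
qed

theorem lemma9:
  fixes k n :: nat and root :: "nat list set"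
    and par :: "nat list set \<Rightarrow> nat list set" and rep :: "nat list set \<Rightarrow> nat list"
  assumes "k \<ge> 2" and "n \<ge> 1"
    and "spanning_tree k n root par"
    and "valid_reps k n root par rep"
  shows "\<not> (\<exists>s \<in> words k n. icr k 0 s \<in> Reps k n root rep \<and> icr k 1 s \<in> Reps k n root rep
                            \<and> icr k 0 s \<noteq> icr k 2 s)
         \<and> (k > 2 \<longrightarrow> \<not> (\<exists>s \<in> words k n. icr k 0 s \<in> Reps k n root rep
                                       \<and> icr k 1 s \<in> Reps k n root rep))"
proof -
  have k_eq_2: "k = 2" if "s \<in> words k n" "icr k 0 s \<in> Reps k n root rep"
    "icr k 1 s \<in> Reps k n root rep" for s
    using icr_0_icr_1_in_Reps_imp_dvd_2[OF _ _ assms(3,4) that] assms(1,2)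
    by (simp add: dvd_imp_le le_antisym)
  have "icr 2 0 s = icr 2 2 s" for s by (simp add: icr_def)
  then show ?thesis using k_eq_2 by fastforce
qed

end
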